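(* Let $T$ be an MFQST with degree bound $\phi\ge3$. Then every source $z$ of $T$ has degree at most $\phi-1$. Moreover, suppose $z$ has degree exactly $\phi-1$, with in-neighbours $u_1,\dots,u_r$ and out-neighbour $y$. Let $$C=\frac{z+\sum_{i} f(u_iz)\,u_i}{1+\sum_i f(u_iz)}$$ be the centre of mass of $z$ (with mass $1$, its supply) and its in-neighbours (each weighted by the flow on its edge to $z$). Then $z=(C+y)/2$.
   Context: Let $Z=\{z_1,\dots,z_n\}\subset\mathbb{R}^2$ ($n\ge 1$) be a set of sources and $z_{BS}\in\mathbb{R}^2\setminus Z$ a sink; each source has supply $1$. A flow-dependent quadratic Steiner tree (FQST) consists of a finite set $S\subset\mathbb{R}^2$ of Steiner points and a tree $T$ with vertex set $Z\cup S\cup\{z_{BS}\}$ whose edges are directed towards $z_{BS}$. Every node other than the sink has exactly one out-edge, and the sink has none. Each edge $e$ carries a positive flow $f(e)$ such that: - at each source, the flow on its out-edge minus the total flow on its in-edges equals $1$; - at each Steiner point, the out-flow equals the total in-flow; - the sink receives total flow $n$. The cost is $L(T)=\sum_{e\in E(T)} f(e)|e|^2$. An MFQST with degree bound $\phi$ is an FQST minimising $L$ among all FQSTs (any finite $S$, any topology) in which every Steiner point has degree at least $\phi$. In-neighbours of a node are the tails of its in-edges; its out-neighbour is the head of its out-edge. *)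

theory Defs
  imports "HOL-Analysis.Analysis"
begin

type_synonym pt = "real^2"

text \<open>An FQST is encoded by its finite Steiner point set S, the head map p
 (the out-neighbour p x of every non-sink node x, i.e. the edge x -> p x) and
 the flow map f (f x is the flow on the out-edge of x). The vertex set is
 Z \<union> S \<union> {zbs}; values of p, f outside the non-sink vertices are irrelevant.\<close>

definition fq_vertices :: "pt set \<Rightarrow> pt \<Rightarrow> pt set \<Rightarrow> pt set" where
  "fq_vertices Z zbs S = Z \<union> S \<union> {zbs}"

definition in_nbrs :: "pt set \<Rightarrow> pt \<Rightarrow> pt set \<Rightarrow> (pt \<Rightarrow> pt) \<Rightarrow> pt \<Rightarrow> pt set" where
  "in_nbrs Z zbs S p v = {w \<in> fq_vertices Z zbs S - {zbs}. p w = v}"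

definition in_flow :: "pt set \<Rightarrow> pt \<Rightarrow> pt set \<Rightarrow> (pt \<Rightarrow> pt) \<Rightarrow> (pt \<Rightarrow> real) \<Rightarrow> pt \<Rightarrow> real" where
  "in_flow Z zbs S p f v = (\<Sum>w\<in>in_nbrs Z zbs S p v. f w)"

definition fq_degree :: "pt set \<Rightarrow> pt \<Rightarrow> pt set \<Rightarrow> (pt \<Rightarrow> pt) \<Rightarrow> pt \<Rightarrow> nat" where
  "fq_degree Z zbs S p v = card (in_nbrs Z zbs S p v) + (if v = zbs then 0 else 1)"

definition is_fqst :: "pt set \<Rightarrow> pt \<Rightarrow> pt set \<Rightarrow> (pt \<Rightarrow> pt) \<Rightarrow> (pt \<Rightarrow> real) \<Rightarrow> bool" where
  "is_fqst Z zbs S p f \<longleftrightarrow>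
     finite S \<and> S \<inter> (Z \<union> {zbs}) = {} \<and>
     (\<forall>x \<in> fq_vertices Z zbs S - {zbs}.
        p x \<in> fq_vertices Z zbs S \<and> (\<exists>k. (p ^^ k) x = zbs) \<and> f x > 0) \<and>
     (\<forall>z \<in> Z. f z - in_flow Z zbs S p f z = 1) \<and>
     (\<forall>s \<in> S. f s = in_flow Z zbs S p f s) \<and>
     in_flow Z zbs S p f zbs = real (card Z)"

definition fq_cost :: "pt set \<Rightarrow> pt \<Rightarrow> pt set \<Rightarrow> (pt \<Rightarrow> pt) \<Rightarrow> (pt \<Rightarrow> real) \<Rightarrow> real" where
  "fq_cost Z zbs S p f = (\<Sum>x \<in> fq_vertices Z zbs S - {zbs}. f x * (norm (x - p x))^2)"

definition deg_bounded :: "nat \<Rightarrow> pt set \<Rightarrow> pt \<Rightarrow> pt set \<Rightarrow> (pt \<Rightarrow> pt) \<Rightarrow> bool" where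
  "deg_bounded \<phi> Z zbs S p \<longleftrightarrow> (\<forall>s \<in> S. fq_degree Z zbs S p s \<ge> \<phi>)"

definition is_mfqst :: "nat \<Rightarrow> pt set \<Rightarrow> pt \<Rightarrow> pt set \<Rightarrow> (pt \<Rightarrow> pt) \<Rightarrow> (pt \<Rightarrow> real) \<Rightarrow> bool" where
  "is_mfqst \<phi> Z zbs S p f \<longleftrightarrow>
     is_fqst Z zbs S p f \<and> deg_bounded \<phi> Z zbs S p \<and>
     (\<forall>S' p' f'. is_fqst Z zbs S' p' f' \<and> deg_bounded \<phi> Z zbs S' p' \<longrightarrow>
        fq_cost Z zbs S p f \<le> fq_cost Z zbs S' p' f')"

end

theory Submission
  imports Defs
begin

(* Let z be a source of a minimal tree, y = p z its out-neighbour, and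
   M any set of in-neighbours of z with at least phi - 2 elements.  Splitting z by a new
   Steiner point x (edges w -> x for w in M, z -> x, x -> y) gives again an admissible tree:
   x has degree card M + 2 >= phi, and the flows of M and z are routed through x.  Minimality
   says that the cost increase, a quadratic function of x, is nonnegative for every x outside
   the finite vertex set.  Its value at x = z is 0, so its gradient at z must vanish; this is
   the balance condition  sum_{w in M} f(w) (w - z) + f(z) (y - z) = 0.
   If deg z >= phi, the balance condition holds both for M = U (all in-neighbours) and for
   M = U - {u}; subtracting gives f(u) (u - z) = 0, impossible.  If deg z = phi - 1, the
   condition for M = U, together with f(z) = 1 + sum_U f, says z = (C + y)/2.
   The file first proves the quadratic-function facts, then basic properties of trees, then
   the splitting construction (validity, degrees, cost), and finally the theorem. *)

section \<open>Quadratic functions with a minimum away from a finite set\<close>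

lemma norm_diff_sq_shift:
  fixes a x z :: "'a::real_inner"
  shows "(norm (a - x))^2 = (norm (a - z))^2 - 2 * inner (a - z) (x - z) + (norm (x - z))^2"
proof -
  have "(norm (a - x))^2 = inner ((a - z) - (x - z)) ((a - z) - (x - z))"
    by (simp add: power2_norm_eq_inner)
  also have "\<dots> = (norm (a - z))^2 - 2 * inner (a - z) (x - z) + (norm (x - z))^2"
    by (simp add: power2_norm_eq_inner inner_diff_left inner_diff_right inner_commute algebra_simps)
  finally show ?thesis .
qed

lemma weighted_norm_diff_sq_shift:
  fixes x z :: "'a::real_inner" and a :: "'a \<Rightarrow> real"
  shows "(\<Sum>w\<in>A. a w * (norm (w - x))^2) = (\<Sum>w\<in>A. a w * (norm (w - z))^2)
           - 2 * inner (\<Sum>w\<in>A. a w *\<^sub>R (w - z)) (x - z) + (\<Sum>w\<in>A. a w) * (norm (x - z))^2"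
  by (simp add: norm_diff_sq_shift[of _ x z] algebra_simps sum.distrib sum_subtractf
      sum_distrib_left sum_distrib_right inner_sum_left)

text \<open>If the quadratic  K |x - z|^2 - 2 <h, x - z>, which vanishes at z, is nonnegative
  outside a finite set, then its linear part h is zero: otherwise it is negative along the
  segment  z + t h  for all small t > 0.\<close>
lemma linear_term_vanishes:
  fixes z h :: "'a::real_inner"
  assumes finV: "finite V"
    and nonneg: "\<And>x. x \<notin> V \<Longrightarrow> 0 \<le> K * (norm (x - z))^2 - 2 * inner h (x - z)"
  shows "h = 0"
proof (rule ccontr)
  assume h: "h \<noteq> 0"
  define \<delta> where "\<delta> = 1 / (\<bar>K\<bar> + 1)"
  have \<delta>: "\<delta> > 0" by (simp add: \<delta>_def add_nonneg_pos)
  have "inj_on (\<lambda>t. z + t *\<^sub>R h) {0<..<\<delta>}"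
    using h by (auto simp: inj_on_def)
  hence "infinite ((\<lambda>t. z + t *\<^sub>R h) ` {0<..<\<delta>})"
    using \<delta> by (simp add: finite_image_iff)
  then obtain t where t: "0 < t" "t < \<delta>" and out: "z + t *\<^sub>R h \<notin> V"
    using finV by (metis (no_types, lifting) finite_subset greaterThanLessThan_iff image_iff subsetI)
  have "\<bar>K\<bar> * t + t < 1"
    using t by (simp add: \<delta>_def field_simps)
  moreover have "K * t \<le> \<bar>K\<bar> * t"
    using t by (intro mult_right_mono) auto
  ultimately have Kt: "K * t - 2 < 0"
    using t by linarith
  have "K * (norm (t *\<^sub>R h))^2 - 2 * inner h (t *\<^sub>R h) = t * (norm h)^2 * (K * t - 2)"
    by (simp add: algebra_simps power2_eq_square flip: power2_norm_eq_inner)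
  also have "\<dots> < 0"
    using t h Kt by (simp add: mult_pos_neg)
  finally show False
    using nonneg[OF out] by simp
qed

section \<open>Reachability along the head map\<close>

definition reaches :: "('a \<Rightarrow> 'a) \<Rightarrow> 'a \<Rightarrow> 'a \<Rightarrow> bool" where
  "reaches g w t \<longleftrightarrow> (\<exists>k. (g ^^ k) w = t)"

lemma reaches_refl: "reaches g t t"
  unfolding reaches_def by (metis funpow_0)

lemma reaches_step: "reaches g (g w) t \<Longrightarrow> reaches g w t"
  unfolding reaches_def by (metis funpow_Suc_right o_apply)

lemma reaches_unstep:
  assumes "reaches g w t" and "w \<noteq> t"
  shows "reaches g (g w) t"
proof -
  obtain k where k: "(g ^^ k) w = t" using assms(1) by (auto simp: reaches_def)
  then obtain j where "k = Suc j" using assms(2) by (cases k) auto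
  with k show ?thesis by (auto simp: reaches_def funpow_Suc_right simp del: funpow.simps)
qed

lemma reaches_invariant:
  assumes "reaches g w t" and "w \<in> A" and "\<And>v. v \<in> A \<Longrightarrow> g v \<in> A"
  shows "t \<in> A"
proof -
  obtain k where "(g ^^ k) w = t" using assms(1) by (auto simp: reaches_def)
  moreover have "(g ^^ k) w \<in> A" for k
    using assms(2,3) by (induction k) auto
  ultimately show ?thesis by blast
qed

lemma fqst_vertices_finite:
  assumes "finite Z" and "is_fqst Z zbs S p f"
  shows "finite (fq_vertices Z zbs S)"
  using assms by (simp add: is_fqst_def fq_vertices_def)

lemma fqst_edge:
  assumes "is_fqst Z zbs S p f" and "w \<in> fq_vertices Z zbs S - {zbs}"
  shows "p w \<in> fq_vertices Z zbs S" and "reaches p w zbs" and "f w > 0"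
  using assms by (auto simp: is_fqst_def reaches_def)

lemma fqst_no_loop:
  assumes "is_fqst Z zbs S p f" and "w \<in> fq_vertices Z zbs S - {zbs}"
  shows "p w \<noteq> w"
proof
  assume "p w = w"
  then have "zbs \<in> {w}"
    using reaches_invariant[OF fqst_edge(2)[OF assms], of "{w}"] by auto
  with assms(2) show False by simp
qed

lemma fqst_no_2cycle:
  assumes "is_fqst Z zbs S p f" and "w \<in> fq_vertices Z zbs S - {zbs}" and "p (p w) = w"
  shows "p w = zbs"
proof -
  have "zbs \<in> {w, p w}"
    using reaches_invariant[OF fqst_edge(2)[OF assms(1,2)], of "{w, p w}"] assms(3) by auto
  with assms(2) show ?thesis by auto
qed

lemma fqst_source_flow:
  assumes "is_fqst Z zbs S p f" and "z \<in> Z"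
  shows "f z = 1 + (\<Sum>u\<in>in_nbrs Z zbs S p z. f u)"
  using assms by (auto simp: is_fqst_def in_flow_def algebra_simps)

section \<open>Splitting a source by a new Steiner point\<close>

definition split_head :: "('a \<Rightarrow> 'a) \<Rightarrow> 'a \<Rightarrow> 'a set \<Rightarrow> 'a \<Rightarrow> 'a \<Rightarrow> 'a" where
  "split_head p z M x w = (if w = x then p z else if w = z \<or> w \<in> M then x else p w)"

definition split_flow :: "('a \<Rightarrow> real) \<Rightarrow> 'a \<Rightarrow> 'a set \<Rightarrow> 'a \<Rightarrow> 'a \<Rightarrow> real" where
  "split_flow f z M x w = (if w = x then f z else if w = z then f z - sum f M else f w)"

lemma reaches_split_head:
  assumes closed: "\<And>v. v \<in> V - {t} \<Longrightarrow> p v \<in> V" and xV: "x \<notin> V"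
    and zV: "z \<in> V" and zt: "z \<noteq> t" and Mz: "\<And>v. v \<in> M \<Longrightarrow> p v = z"
    and wV: "w \<in> V" and reach: "reaches p w t"
  shows "reaches (split_head p z M x) w t"
proof -
  let ?q = "split_head p z M x"
  have q_x: "?q x = p z" and q_z: "?q z = x" and q_M: "\<And>v. v \<in> M \<Longrightarrow> v \<noteq> x \<Longrightarrow> ?q v = x"
    and q_other: "\<And>v. v \<noteq> x \<Longrightarrow> v \<noteq> z \<Longrightarrow> v \<notin> M \<Longrightarrow> ?q v = p v"
    using xV zV by (auto simp: split_head_def)
  have x_reaches: "reaches ?q x t" if "reaches ?q (p z) t"
    using that reaches_step[of ?q x t] q_x by simp
  obtain k where "(p ^^ k) w = t" using reach by (auto simp: reaches_def)
  then show ?thesis using wV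
  proof (induction k arbitrary: w)
    case 0
    then show ?case by (simp add: reaches_refl)
  next
    case (Suc k)
    show ?case
    proof (cases "w = t")
      case True
      then show ?thesis by (simp add: reaches_refl)
    next
      case False
      have pw: "p w \<in> V" using closed Suc.prems False by blast
      have IH: "reaches ?q (p w) t"
        using Suc.IH[OF _ pw] Suc.prems(1) by (simp add: funpow_Suc_right del: funpow.simps)
      have wx: "w \<noteq> x" using wV xV Suc.prems(2) by blast
      consider "w = z" | "w \<noteq> z" "w \<in> M" | "w \<noteq> z" "w \<notin> M" by blast
      then show ?thesis
      proof cases
        case 1
        then show ?thesis
          using x_reaches IH reaches_step[of ?q w t] q_z by simp
      next
        case 2
        have "reaches ?q (?q z) t"
          using reaches_unstep[OF _ zt] IH Mz[OF \<open>w \<in> M\<close>] by simp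
        then show ?thesis
          using 2 wx reaches_step[of ?q w t] q_z q_M by simp
      next
        case 3
        then show ?thesis
          using 3 IH wx reaches_step[of ?q w t] q_other by simp
      qed
    qed
  qed
qed

context
  fixes Z S M :: "pt set" and zbs z x :: pt and p :: "pt \<Rightarrow> pt" and f :: "pt \<Rightarrow> real"
  assumes finZ: "finite Z" and zbsZ: "zbs \<notin> Z" and fq: "is_fqst Z zbs S p f"
    and z: "z \<in> Z" and M: "M \<subseteq> in_nbrs Z zbs S p z" and x: "x \<notin> fq_vertices Z zbs S"
begin

lemma split_setting:
  shows "finite (fq_vertices Z zbs S)" and "z \<in> fq_vertices Z zbs S - {zbs}"
    and "p z \<in> fq_vertices Z zbs S" and "p z \<noteq> z"
    and "\<And>v. v \<in> M \<Longrightarrow> v \<in> fq_vertices Z zbs S - {zbs} \<and> p v = z"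
    and "z \<notin> M" and "p z \<notin> M" and "finite M"
    and "x \<notin> Z" and "x \<notin> S" and "x \<noteq> zbs" and "x \<noteq> z" and "x \<noteq> p z" and "x \<notin> M"
    and "fq_vertices Z zbs (insert x S) = insert x (fq_vertices Z zbs S)"
    and "z \<notin> S"
proof -
  show finV: "finite (fq_vertices Z zbs S)" using fqst_vertices_finite[OF finZ fq] .
  show zV: "z \<in> fq_vertices Z zbs S - {zbs}" using z zbsZ by (auto simp: fq_vertices_def)
  show pzV: "p z \<in> fq_vertices Z zbs S" using fqst_edge(1)[OF fq zV] .
  show pzz: "p z \<noteq> z" using fqst_no_loop[OF fq zV] .
  show Mv: "\<And>v. v \<in> M \<Longrightarrow> v \<in> fq_vertices Z zbs S - {zbs} \<and> p v = z"
    using M by (auto simp: in_nbrs_def)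
  show "z \<notin> M" using Mv pzz by blast
  show "p z \<notin> M"
  proof
    assume "p z \<in> M"
    then have "p z \<noteq> zbs" and "p (p z) = z" using Mv by auto
    with fqst_no_2cycle[OF fq zV] show False by blast
  qed
  show "finite M" using finV Mv by (meson DiffD1 finite_subset subsetI)
  show "x \<notin> Z" "x \<notin> S" "x \<noteq> zbs" "x \<noteq> z" "x \<noteq> p z" "x \<notin> M"
    using x zV pzV Mv by (auto simp: fq_vertices_def)
  show "fq_vertices Z zbs (insert x S) = insert x (fq_vertices Z zbs S)"
    by (auto simp: fq_vertices_def)
  show "z \<notin> S" using fq z by (auto simp: is_fqst_def)
qed

lemma split_in_nbrs:
  shows "in_nbrs Z zbs (insert x S) (split_head p z M x) x = insert z M"
    and "in_nbrs Z zbs (insert x S) (split_head p z M x) z = in_nbrs Z zbs S p z - M"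
    and "in_nbrs Z zbs (insert x S) (split_head p z M x) (p z)
           = insert x (in_nbrs Z zbs S p (p z) - {z})"
    and "\<And>v. v \<noteq> x \<Longrightarrow> v \<noteq> z \<Longrightarrow> v \<noteq> p z \<Longrightarrow>
           in_nbrs Z zbs (insert x S) (split_head p z M x) v = in_nbrs Z zbs S p v"
  using split_setting x fqst_edge(1)[OF fq] by (auto simp: in_nbrs_def split_head_def)

lemma split_in_flow:
  shows "in_flow Z zbs (insert x S) (split_head p z M x) (split_flow f z M x) x = f z"
    and "in_flow Z zbs (insert x S) (split_head p z M x) (split_flow f z M x) z
           = in_flow Z zbs S p f z - sum f M"
    and "\<And>v. v \<noteq> x \<Longrightarrow> v \<noteq> z \<Longrightarrow>
           in_flow Z zbs (insert x S) (split_head p z M x) (split_flow f z M x) v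
           = in_flow Z zbs S p f v"
proof -
  let ?f' = "split_flow f z M x"
  let ?U = "\<lambda>v. in_nbrs Z zbs S p v"
  have f'_other: "?f' v = f v" if "v \<noteq> x" "v \<noteq> z" for v
    using that by (simp add: split_flow_def)
  have U_sub: "?U v \<subseteq> fq_vertices Z zbs S" for v
    by (auto simp: in_nbrs_def)
  have finU: "finite (?U v)" for v
    using finite_subset[OF U_sub split_setting(1)] .
  have x_U: "x \<notin> ?U v" for v
    using U_sub x by blast
  have sum_M: "sum ?f' M = sum f M"
    using split_setting by (intro sum.cong) (auto simp: split_flow_def)
  show "in_flow Z zbs (insert x S) (split_head p z M x) ?f' x = f z"
    using split_setting sum_M by (simp add: in_flow_def split_in_nbrs(1) split_flow_def)
  have z_U: "z \<notin> ?U z"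
    using split_setting(4) by (auto simp: in_nbrs_def)
  have "sum ?f' (?U z - M) = sum f (?U z - M)"
    using x_U z_U by (intro sum.cong) (auto simp: split_flow_def)
  then show "in_flow Z zbs (insert x S) (split_head p z M x) ?f' z = in_flow Z zbs S p f z - sum f M"
    using sum_diff[OF finU M] by (simp add: in_flow_def split_in_nbrs(2))
  fix v assume vx: "v \<noteq> x" and vz: "v \<noteq> z"
  show "in_flow Z zbs (insert x S) (split_head p z M x) ?f' v = in_flow Z zbs S p f v"
  proof (cases "v = p z")
    case True
    have z_in: "z \<in> ?U v"
      using True split_setting(2) by (simp add: in_nbrs_def)
    have "sum ?f' (?U v - {z}) = sum f (?U v - {z})"
      using x_U by (intro sum.cong refl f'_other) auto
    then have "sum ?f' (insert x (?U v - {z})) = f z + sum f (?U v - {z})"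
      using finU x_U by (simp add: split_flow_def)
    also have "\<dots> = sum f (?U v)"
      using sum.remove[OF finU z_in, of f] by simp
    finally show ?thesis
      using True by (simp add: in_flow_def split_in_nbrs(3))
  next
    case False
    have "z \<notin> ?U v"
      using False by (auto simp: in_nbrs_def)
    then show ?thesis
      using False vx vz x_U split_in_nbrs(4)[OF vx vz False]
      by (simp add: in_flow_def) (intro sum.cong; auto simp: split_flow_def)
  qed
qed

text \<open>The edge z -> x still carries at least the supply of z, so its flow is positive.\<close>
lemma split_flow_z_pos: "split_flow f z M x z > 0"
proof -
  let ?U = "in_nbrs Z zbs S p z"
  have "finite ?U" using split_setting(1) by (simp add: in_nbrs_def)
  then have "in_flow Z zbs S p f z - sum f M = sum f (?U - M)"
    using sum_diff[OF _ M, of f] by (simp add: in_flow_def)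
  moreover have "sum f (?U - M) \<ge> 0"
    using fqst_edge(3)[OF fq] by (intro sum_nonneg) (auto simp: in_nbrs_def less_imp_le)
  moreover have "f z - in_flow Z zbs S p f z = 1"
    using fq z by (simp add: is_fqst_def)
  ultimately show ?thesis
    using split_setting(12) by (simp add: split_flow_def)
qed

lemma split_edge:
  assumes w: "w \<in> insert x (fq_vertices Z zbs S) - {zbs}"
  shows "split_head p z M x w \<in> insert x (fq_vertices Z zbs S)
    \<and> reaches (split_head p z M x) w zbs \<and> split_flow f z M x w > 0"
proof -
  let ?q = "split_head p z M x" and ?f' = "split_flow f z M x"
  have zV: "z \<in> fq_vertices Z zbs S - {zbs}" using split_setting(2) .
  have reach_old: "reaches ?q v zbs" if "v \<in> fq_vertices Z zbs S" "reaches p v zbs" for v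
    using reaches_split_head[OF fqst_edge(1)[OF fq] x _ _ _ that] zV split_setting(5) by blast
  show ?thesis
  proof (cases "w = x")
    case True
    have "reaches p (p z) zbs"
      using reaches_unstep[OF fqst_edge(2)[OF fq zV]] zV by blast
    then have "reaches ?q (?q x) zbs"
      using reach_old split_setting(3) by (simp add: split_head_def)
    then have "reaches ?q x zbs" by (rule reaches_step)
    then show ?thesis
      using True split_setting(3) fqst_edge(3)[OF fq zV]
      by (simp add: split_head_def split_flow_def)
  next
    case False
    with w have wV: "w \<in> fq_vertices Z zbs S - {zbs}" by blast
    have "?q w \<in> insert x (fq_vertices Z zbs S)"
      using False fqst_edge(1)[OF fq wV] by (simp add: split_head_def)
    moreover have "?f' w > 0"
      using False split_flow_z_pos fqst_edge(3)[OF fq wV] by (auto simp: split_flow_def)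
    ultimately show ?thesis
      using reach_old fqst_edge(2)[OF fq wV] wV by blast
  qed
qed

lemma split_conservation:
  shows "\<And>s. s \<in> Z \<Longrightarrow> split_flow f z M x s
           - in_flow Z zbs (insert x S) (split_head p z M x) (split_flow f z M x) s = 1"
    and "\<And>s. s \<in> insert x S \<Longrightarrow> split_flow f z M x s
           = in_flow Z zbs (insert x S) (split_head p z M x) (split_flow f z M x) s"
    and "in_flow Z zbs (insert x S) (split_head p z M x) (split_flow f z M x) zbs = real (card Z)"
proof -
  have flZ: "\<And>s. s \<in> Z \<Longrightarrow> f s - in_flow Z zbs S p f s = 1"
    and flS: "\<And>s. s \<in> S \<Longrightarrow> f s = in_flow Z zbs S p f s"
    and flB: "in_flow Z zbs S p f zbs = real (card Z)"
    using fq by (auto simp: is_fqst_def)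
  show "split_flow f z M x s
          - in_flow Z zbs (insert x S) (split_head p z M x) (split_flow f z M x) s = 1"
    if s: "s \<in> Z" for s
  proof (cases "s = z")
    case True
    then show ?thesis
      using flZ[OF z] split_in_flow(2) split_setting(12) by (simp add: split_flow_def)
  next
    case False
    moreover have "s \<noteq> x" using s split_setting(9) by blast
    ultimately show ?thesis
      using flZ[OF s] split_in_flow(3) by (simp add: split_flow_def)
  qed
  show "split_flow f z M x s
          = in_flow Z zbs (insert x S) (split_head p z M x) (split_flow f z M x) s"
    if s: "s \<in> insert x S" for s
  proof (cases "s = x")
    case True
    then show ?thesis using split_in_flow(1) by (simp add: split_flow_def)
  next
    case False
    with s have "s \<in> S" by simp
    then show ?thesis
      using False flS split_in_flow(3) split_setting(16) by (auto simp: split_flow_def)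
  qed
  show "in_flow Z zbs (insert x S) (split_head p z M x) (split_flow f z M x) zbs = real (card Z)"
    using flB split_in_flow(3) split_setting(2,11) by auto
qed

lemma split_is_fqst: "is_fqst Z zbs (insert x S) (split_head p z M x) (split_flow f z M x)"
  using fq split_setting(9,11) split_edge split_conservation
  unfolding is_fqst_def split_setting(15) reaches_def by auto

text \<open>The new Steiner point x has degree card M + 2, and all old Steiner points keep
  their degree, so the degree bound survives when card M + 2 is large enough.\<close>
lemma split_deg_bounded:
  assumes db: "deg_bounded \<phi> Z zbs S p" and card_M: "\<phi> \<le> card M + 2"
  shows "deg_bounded \<phi> Z zbs (insert x S) (split_head p z M x)"
  unfolding deg_bounded_def
proof
  let ?q = "split_head p z M x"
  fix s assume s: "s \<in> insert x S"
  show "\<phi> \<le> fq_degree Z zbs (insert x S) ?q s"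
  proof (cases "s = x")
    case True
    then show ?thesis
      using card_M split_setting(6,8,11) by (simp add: fq_degree_def split_in_nbrs(1))
  next
    case False
    with s have sS: "s \<in> S" by simp
    have sz: "s \<noteq> z"
      using sS split_setting(16) by blast
    let ?A = "in_nbrs Z zbs S p s"
    have "card (in_nbrs Z zbs (insert x S) ?q s) = card ?A"
    proof (cases "s = p z")
      case True
      have "finite ?A" using split_setting(1) by (simp add: in_nbrs_def)
      moreover have "z \<in> ?A" using True split_setting(2) by (simp add: in_nbrs_def)
      moreover have "x \<notin> ?A" using x by (simp add: in_nbrs_def)
      ultimately have "card (insert x (?A - {z})) = card ?A"
        by (metis DiffD1 card_Suc_Diff1 card_insert_disjoint finite_Diff)
      then show ?thesis
        using True split_in_nbrs(3) by simp
    next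
      case False
      then show ?thesis using split_in_nbrs(4) \<open>s \<noteq> x\<close> sz by simp
    qed
    then show ?thesis
      using db sS by (simp add: deg_bounded_def fq_degree_def)
  qed
qed

text \<open>Cost of the split tree: the edges z -> p z and w -> z (w in M) are replaced by
  x -> p z, z -> x and w -> x; all other edges are unchanged.\<close>
lemma split_cost:
  "fq_cost Z zbs (insert x S) (split_head p z M x) (split_flow f z M x)
     + f z * (norm (z - p z))^2 + (\<Sum>w\<in>M. f w * (norm (w - z))^2)
   = fq_cost Z zbs S p f + f z * (norm (x - p z))^2 + (f z - sum f M) * (norm (z - x))^2
     + (\<Sum>w\<in>M. f w * (norm (w - x))^2)"
proof -
  let ?q = "split_head p z M x" and ?f' = "split_flow f z M x"
  define N where "N = fq_vertices Z zbs S - {zbs}"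
  define R where "R = N - insert z M"
  define g where "g = (\<lambda>w. f w * (norm (w - p w))^2)"
  define g' where "g' = (\<lambda>w. ?f' w * (norm (w - ?q w))^2)"
  have finN: "finite N" using split_setting(1) by (simp add: N_def)
  have zMN: "insert z M \<subseteq> N" using split_setting(2,5) by (auto simp: N_def)
  have xN: "x \<notin> N" using x by (simp add: N_def)
  have old: "fq_cost Z zbs S p f = sum g R + f z * (norm (z - p z))^2 + (\<Sum>w\<in>M. f w * (norm (w - z))^2)"
  proof -
    have "fq_cost Z zbs S p f = sum g R + sum g (insert z M)"
      using sum.subset_diff[OF zMN finN] by (simp add: fq_cost_def g_def N_def R_def)
    also have "sum g (insert z M) = g z + sum g M" using split_setting(6,8) by simp
    also have "sum g M = (\<Sum>w\<in>M. f w * (norm (w - z))^2)"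
      using split_setting(5) by (intro sum.cong) (auto simp: g_def)
    finally show ?thesis by (simp add: g_def)
  qed
  have new: "fq_cost Z zbs (insert x S) ?q ?f' = f z * (norm (x - p z))^2 + sum g R
      + (f z - sum f M) * (norm (z - x))^2 + (\<Sum>w\<in>M. f w * (norm (w - x))^2)"
  proof -
    have "fq_cost Z zbs (insert x S) ?q ?f' = g' x + sum g' N"
      using finN xN split_setting(11,15) by (simp add: fq_cost_def g'_def N_def insert_Diff_if)
    also have "sum g' N = sum g' R + sum g' (insert z M)"
      using sum.subset_diff[OF zMN finN] by (simp add: R_def)
    also have "sum g' (insert z M) = g' z + sum g' M" using split_setting(6,8) by simp
    also have "sum g' M = (\<Sum>w\<in>M. f w * (norm (w - x))^2)"
      using split_setting(6,14) by (intro sum.cong) (auto simp: g'_def split_head_def split_flow_def)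
    also have "sum g' R = sum g R"
      using xN by (intro sum.cong) (auto simp: R_def g'_def g_def split_head_def split_flow_def)
    also have "g' x = f z * (norm (x - p z))^2"
      by (simp add: g'_def split_head_def split_flow_def)
    also have "g' z = (f z - sum f M) * (norm (z - x))^2"
      using split_setting(12) by (simp add: g'_def split_head_def split_flow_def)
    finally show ?thesis by simp
  qed
  show ?thesis using old new by simp
qed

end

section \<open>The balance condition at a source of a minimal tree\<close>

text \<open>Proof: splitting z at any
  non-vertex x is admissible, so by minimality the cost increase
  2 f(z) |x - z|^2 - 2 <h, x - z>  is nonnegative, which forces h = 0.\<close>
lemma mfqst_balance:
  assumes finZ: "finite Z" and zbsZ: "zbs \<notin> Z" and mf: "is_mfqst \<phi> Z zbs S p f"
    and z: "z \<in> Z" and M: "M \<subseteq> in_nbrs Z zbs S p z" and card_M: "\<phi> \<le> card M + 2"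
  shows "(\<Sum>w\<in>M. f w *\<^sub>R (w - z)) + f z *\<^sub>R (p z - z) = 0"
proof (rule linear_term_vanishes[where K = "2 * f z"])
  have fq: "is_fqst Z zbs S p f" and db: "deg_bounded \<phi> Z zbs S p"
    and minimal: "\<And>S' p' f'. is_fqst Z zbs S' p' f' \<Longrightarrow> deg_bounded \<phi> Z zbs S' p' \<Longrightarrow>
        fq_cost Z zbs S p f \<le> fq_cost Z zbs S' p' f'"
    using mf unfolding is_mfqst_def by blast+
  show "finite (fq_vertices Z zbs S)" using fqst_vertices_finite[OF finZ fq] .
  fix x assume x: "x \<notin> fq_vertices Z zbs S"
  let ?y = "p z" and ?h = "(\<Sum>w\<in>M. f w *\<^sub>R (w - z)) + f z *\<^sub>R (p z - z)"
  have "fq_cost Z zbs S p f \<le> fq_cost Z zbs (insert x S) (split_head p z M x) (split_flow f z M x)"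
    using minimal split_is_fqst[OF finZ zbsZ fq z M x]
      split_deg_bounded[OF finZ zbsZ fq z M x db card_M] by blast
  then have "0 \<le> f z * (norm (x - ?y))^2 + (f z - sum f M) * (norm (z - x))^2
      + (\<Sum>w\<in>M. f w * (norm (w - x))^2) - f z * (norm (z - ?y))^2 - (\<Sum>w\<in>M. f w * (norm (w - z))^2)"
    using split_cost[OF finZ zbsZ fq z M x] by linarith
  also have "\<dots> = 2 * f z * (norm (x - z))^2 - 2 * inner ?h (x - z)"
  proof -
    have out_edge: "(norm (x - ?y))^2 = (norm (?y - z))^2 - 2 * inner (?y - z) (x - z) + (norm (x - z))^2"
      using norm_diff_sq_shift[of ?y x z] by (simp add: norm_minus_commute)
    have sym: "(norm (z - x))^2 = (norm (x - z))^2" "(norm (z - ?y))^2 = (norm (?y - z))^2"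
      by (simp_all add: norm_minus_commute)
    show ?thesis
      unfolding out_edge sym weighted_norm_diff_sq_shift[where a = f and A = M and x = x and z = z]
      by (simp add: inner_add_left algebra_simps)
  qed
  finally show "0 \<le> 2 * f z * (norm (x - z))^2 - 2 * inner ?h (x - z)" .
qed

lemma midpoint_centre_of_mass:
  fixes z y :: "'a::real_vector" and a :: "'a \<Rightarrow> real"
  assumes balance: "(\<Sum>u\<in>U. a u *\<^sub>R (u - z)) + (1 + sum a U) *\<^sub>R (y - z) = 0"
    and pos: "1 + sum a U \<noteq> 0"
  shows "z = (1/2) *\<^sub>R ((1 / (1 + sum a U)) *\<^sub>R (z + (\<Sum>u\<in>U. a u *\<^sub>R u)) + y)"
proof -
  define s where "s = sum a U"
  define A where "A = (\<Sum>u\<in>U. a u *\<^sub>R u)"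
  have "(\<Sum>u\<in>U. a u *\<^sub>R (u - z)) = A - s *\<^sub>R z"
    by (simp add: A_def s_def scaleR_diff_right sum_subtractf scaleR_sum_left)
  with balance have balance': "A - s *\<^sub>R z + (1 + s) *\<^sub>R (y - z) = 0"
    by (simp add: s_def)
  have "A = (A - s *\<^sub>R z + (1 + s) *\<^sub>R (y - z)) + s *\<^sub>R z - (1 + s) *\<^sub>R (y - z)"
    by simp
  also have "\<dots> = s *\<^sub>R z - (1 + s) *\<^sub>R (y - z)"
    using balance' by simp
  finally have "z + A = (1 + s) *\<^sub>R (2 *\<^sub>R z - y)"
    by (simp add: algebra_simps scaleR_2)
  then have "(1 / (1 + s)) *\<^sub>R (z + A) + y = 2 *\<^sub>R z"
    using pos by (simp add: s_def)
  then show ?thesis by (simp add: s_def A_def)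
qed

text \<open>A source of an MFQST has fewer than phi - 1 in-neighbours: otherwise the balance
  condition holds both for all in-neighbours and for all but one of them, u, so the pull
  f(u) (u - z) of u would vanish.\<close>
lemma mfqst_source_in_degree:
  assumes finZ: "finite Z" and zbsZ: "zbs \<notin> Z" and mf: "is_mfqst \<phi> Z zbs S p f"
    and z: "z \<in> Z" and \<phi>: "\<phi> \<ge> 2"
  shows "card (in_nbrs Z zbs S p z) + 2 \<le> \<phi>"
proof (rule ccontr)
  let ?U = "in_nbrs Z zbs S p z"
  let ?pull = "\<lambda>w. f w *\<^sub>R (w - z)"
  have fq: "is_fqst Z zbs S p f" using mf by (simp add: is_mfqst_def)
  assume "\<not> ?thesis"
  then have big: "\<phi> \<le> card ?U + 1" by simp
  then obtain u where u: "u \<in> ?U" using \<phi> by fastforce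
  have finU: "finite ?U"
    using fqst_vertices_finite[OF finZ fq] by (simp add: in_nbrs_def)
  have "card (?U - {u}) + 2 = card ?U + 1"
    using finU u by (simp add: card_Diff_singleton) (metis Suc_pred card_gt_0_iff empty_iff)
  then have rest: "sum ?pull (?U - {u}) + f z *\<^sub>R (p z - z) = 0"
    using mfqst_balance[OF finZ zbsZ mf z, of "?U - {u}"] big by auto
  have all: "sum ?pull ?U + f z *\<^sub>R (p z - z) = 0"
    using mfqst_balance[OF finZ zbsZ mf z, of ?U] big by simp
  have "?pull u = (sum ?pull ?U + f z *\<^sub>R (p z - z)) - (sum ?pull (?U - {u}) + f z *\<^sub>R (p z - z))"
    using sum.remove[OF finU u, of ?pull] by simp
  then have "?pull u = 0"
    using all rest by simp
  moreover have uV: "u \<in> fq_vertices Z zbs S - {zbs}" and "p u = z"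
    using u by (auto simp: in_nbrs_def)
  then have "u \<noteq> z" using fqst_no_loop[OF fq uV] by blast
  ultimately show False
    using fqst_edge(3)[OF fq uV] by simp
qed

theorem mainTheorem9:
  fixes Z :: "(real^2) set" and zbs :: "real^2" and S :: "(real^2) set"
    and p :: "real^2 \<Rightarrow> real^2" and f :: "real^2 \<Rightarrow> real" and \<phi> :: nat
  assumes "finite Z" and "Z \<noteq> {}" and "zbs \<notin> Z"
    and "\<phi> \<ge> 3"
    and "is_mfqst \<phi> Z zbs S p f"
    and "z \<in> Z"
  shows "fq_degree Z zbs S p z \<le> \<phi> - 1 \<and>
    (fq_degree Z zbs S p z = \<phi> - 1 \<longrightarrow>
      (let U = in_nbrs Z zbs S p z;
           C = (1 / (1 + (\<Sum>u\<in>U. f u))) *\<^sub>R (z + (\<Sum>u\<in>U. f u *\<^sub>R u))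
       in z = (1/2) *\<^sub>R (C + p z)))"
proof -
  let ?U = "in_nbrs Z zbs S p z"
  have fq: "is_fqst Z zbs S p f" using assms(5) by (simp add: is_mfqst_def)
  have degree: "fq_degree Z zbs S p z = card ?U + 1"
    using assms(3,6) by (auto simp: fq_degree_def)
  have bound: "card ?U + 2 \<le> \<phi>"
    using mfqst_source_in_degree[OF assms(1,3,5,6)] assms(4) by simp
  have centre: "z = (1/2) *\<^sub>R ((1 / (1 + sum f ?U)) *\<^sub>R (z + (\<Sum>u\<in>?U. f u *\<^sub>R u)) + p z)"
    if "card ?U + 2 = \<phi>"
  proof (rule midpoint_centre_of_mass)
    have out_flow: "f z = 1 + sum f ?U" using fqst_source_flow[OF fq assms(6)] .
    show "(\<Sum>u\<in>?U. f u *\<^sub>R (u - z)) + (1 + sum f ?U) *\<^sub>R (p z - z) = 0"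
      using mfqst_balance[OF assms(1,3,5,6) subset_refl] that out_flow by simp
    show "1 + sum f ?U \<noteq> 0"
      using fqst_edge(3)[OF fq, of z] assms(3,6) out_flow by (force simp: fq_vertices_def)
  qed
  show ?thesis
    using degree bound centre by (auto simp: Let_def)
qed

end
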